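(* Let $C \subset \mathbb{R}^n$ be convex and closed with nonempty interior, and let $h\colon C\to\mathbb{R}$ be Legendre on $C$, continuous on $C$, and satisfy condition (B): for every sequence $(x_k)_{k\in\mathbb{N}} \subset \mathrm{int}\, C$ and every $y \in C$, if $x_k \to y$ then $D_h(y,x_k) \to 0$. Let $x \in \mathrm{bd}\, C$ and $y \in C$ be such that $\frac{x+y}{2} \in \mathrm{int}\, C$. Then $D_h\big(y, (1-\lambda)x + \lambda y\big) \to +\infty$ as $\lambda \to 0^+$.
   Context: A convex function $h \colon C \to \mathbb{R}$ on a convex set $C\subset\mathbb{R}^n$ with nonempty interior is called Legendre if (1) $h$ is continuously differentiable on $\mathrm{int}\, C$ and $\|\nabla h(x)\| \to +\infty$ whenever $x \in \mathrm{int}\, C$ approaches a point of the boundary of $C$; and (2) $h$ is strictly convex on $\mathrm{int}\, C$. The Bregman divergence is $D_h(y,x) = h(y) - h(x) - \langle \nabla h(x), y - x\rangle$ for $y \in C$, $x \in \mathrm{int}\, C$. $\mathrm{bd}\, C$ denotes the boundary of $C$. *)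

theory Defs
  imports "HOL-Analysis.Analysis"
begin

definition grad :: "('a::euclidean_space \<Rightarrow> real) \<Rightarrow> 'a \<Rightarrow> 'a" where
  "grad h x = (\<Sum>b\<in>Basis. frechet_derivative h (at x) b *\<^sub>R b)"

definition strict_convex_on :: "'a::real_vector set \<Rightarrow> ('a \<Rightarrow> real) \<Rightarrow> bool" where
  "strict_convex_on S f \<longleftrightarrow>
     (\<forall>x\<in>S. \<forall>y\<in>S. x \<noteq> y \<longrightarrow> (\<forall>u::real. 0 < u \<and> u < 1 \<longrightarrow>
        f ((1 - u) *\<^sub>R x + u *\<^sub>R y) < (1 - u) * f x + u * f y))"

definition legendre :: "'a::euclidean_space set \<Rightarrow> ('a \<Rightarrow> real) \<Rightarrow> bool" where
  "legendre C h \<longleftrightarrow>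
     convex C \<and> interior C \<noteq> {} \<and> convex_on C h \<and>
     (\<forall>x\<in>interior C. h differentiable (at x)) \<and>
     continuous_on (interior C) (grad h) \<and>
     (\<forall>z\<in>frontier C. filterlim (\<lambda>x. norm (grad h x)) at_top (at z within interior C)) \<and>
     strict_convex_on (interior C) h"

definition bregman :: "('a::euclidean_space \<Rightarrow> real) \<Rightarrow> 'a \<Rightarrow> 'a \<Rightarrow> real" where
  "bregman h y x = h y - h x - grad h x \<bullet> (y - x)"

end

theory Submission imports Defs begin

text \<open>Let \<open>z\<^sub>t = (1 - t) x + t y\<close>, \<open>m = (x + y)/2\<close> and \<open>g = \<nabla>h(z\<^sub>t)\<close>; fix a ball \<open>B(m, r)\<close> inside
  \<open>int C\<close> and a bound \<open>M\<close> for \<open>|h|\<close> on that ball and on the segment \<open>[x, y]\<close>.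
  The subgradient inequality at \<open>z\<^sub>t\<close>, tested at the point \<open>m + r g/|g|\<close> of the ball, gives
  \<open>\<langle>g, m - z\<^sub>t\<rangle> \<le> 2M - r|g|\<close>. Since \<open>y - z\<^sub>t\<close> is a multiple \<open>c \<ge> 1\<close> of \<open>m - z\<^sub>t\<close>, this yields
  \<open>D\<^sub>h(y, z\<^sub>t) \<ge> r|g| - 4M\<close> as soon as \<open>r|g| \<ge> 2M\<close>. As \<open>t \<rightarrow> 0\<^sup>+\<close>, \<open>z\<^sub>t\<close> tends to the boundary
  point \<open>x\<close> from inside \<open>int C\<close>, so \<open>|g| \<rightarrow> \<infinity>\<close> because \<open>h\<close> is Legendre.\<close>

lemma grad_inner_eq_frechet_derivative:
  fixes h :: "'a::euclidean_space \<Rightarrow> real"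
  assumes "h differentiable (at z)"
  shows "grad h z \<bullet> v = frechet_derivative h (at z) v"
proof -
  have "linear (frechet_derivative h (at z))"
    using assms frechet_derivative_works has_derivative_linear by blast
  from Linear_Algebra.linear_componentwise[OF this, of v 1]
  have "frechet_derivative h (at z) v = (\<Sum>b\<in>Basis. (v \<bullet> b) * frechet_derivative h (at z) b)"
    by simp
  also have "\<dots> = grad h z \<bullet> v"
    unfolding grad_def inner_sum_left by (intro sum.cong refl) (simp add: inner_commute)
  finally show ?thesis ..
qed

lemma convex_on_has_derivative_le:
  fixes f :: "'a::real_normed_vector \<Rightarrow> real"
  assumes cvx: "convex_on S f" and "x \<in> S" "y \<in> S"
    and f': "(f has_derivative f') (at x)"
  shows "f x + f' (y - x) \<le> f y"
proof -
  have "((\<lambda>s. x + s *\<^sub>R (y - x)) has_derivative (\<lambda>s. s *\<^sub>R (y - x))) (at 0)"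
    by (auto intro!: derivative_eq_intros)
  moreover have "(f has_derivative f') (at (x + 0 *\<^sub>R (y - x)))"
    using f' by simp
  ultimately have "((\<lambda>s. f (x + s *\<^sub>R (y - x))) has_derivative (\<lambda>s. f' (s *\<^sub>R (y - x)))) (at 0)"
    by (rule has_derivative_compose)
  moreover have "(\<lambda>s. f' (s *\<^sub>R (y - x))) = (\<lambda>s. f' (y - x) * s)"
    using f' has_derivative_linear linear_scale by (fastforce simp: mult.commute)
  ultimately have "((\<lambda>s. f (x + s *\<^sub>R (y - x))) has_real_derivative f' (y - x)) (at 0)"
    by (simp add: has_field_derivative_def)
  then have "((\<lambda>s. (f (x + s *\<^sub>R (y - x)) - f x) / s) \<longlongrightarrow> f' (y - x)) (at_right 0)"
    unfolding has_field_derivative_iff by (auto intro: tendsto_mono[OF at_le])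
  moreover have "\<forall>\<^sub>F s in at_right 0. (f (x + s *\<^sub>R (y - x)) - f x) / s \<le> f y - f x"
    unfolding eventually_at_right_field
  proof (intro exI[of _ 1] conjI allI impI)
    fix s :: real assume s: "0 < s" "s < 1"
    have "f ((1 - s) *\<^sub>R x + s *\<^sub>R y) \<le> (1 - s) * f x + s * f y"
      using convex_onD[OF cvx] s assms by simp
    moreover have "(1 - s) *\<^sub>R x + s *\<^sub>R y = x + s *\<^sub>R (y - x)"
      by (simp add: algebra_simps)
    ultimately show "(f (x + s *\<^sub>R (y - x)) - f x) / s \<le> f y - f x"
      using s by (simp add: divide_simps algebra_simps)
  qed simp
  ultimately have "f' (y - x) \<le> f y - f x"
    by (rule tendsto_upperbound) simp
  then show ?thesis by simp
qed

lemma convex_on_grad_le: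
  fixes h :: "'a::euclidean_space \<Rightarrow> real"
  assumes "convex_on S h" "z \<in> S" "w \<in> S" "h differentiable (at z)"
  shows "h z + grad h z \<bullet> (w - z) \<le> h w"
  using convex_on_has_derivative_le[OF assms(1-3) frechet_derivative_works[THEN iffD1, OF assms(4)]]
  by (simp add: grad_inner_eq_frechet_derivative[OF assms(4)])

lemma bregman_ge_norm_grad:
  fixes h :: "'a::euclidean_space \<Rightarrow> real"
  assumes cvx: "convex_on S h" and z: "z \<in> S" "h differentiable (at z)"
    and ball: "0 \<le> r" "cball m r \<subseteq> S"
    and y: "y - z = c *\<^sub>R (m - z)" "1 \<le> c"
    and bound: "\<forall>w\<in>cball m r. \<bar>h w\<bar> \<le> M" "\<bar>h z\<bar> \<le> M" "\<bar>h y\<bar> \<le> M"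
    and large: "2 * M \<le> r * norm (grad h z)"
  shows "r * norm (grad h z) - 4 * M \<le> bregman h y z"
proof -
  define g where "g = grad h z"
  define w where "w = m + r *\<^sub>R sgn g"
  have "w \<in> cball m r"
    using ball(1) by (simp add: w_def dist_norm norm_sgn mult_left_le)
  then have hw: "\<bar>h w\<bar> \<le> M" and "w \<in> S"
    using bound(1) ball(2) by auto
  have "g \<bullet> sgn g = norm g"
    by (cases "g = 0") (simp_all add: sgn_div_norm power2_norm_eq_inner [symmetric] power2_eq_square)
  then have "g \<bullet> (w - z) = g \<bullet> (m - z) + r * norm g"
    by (simp add: w_def algebra_simps inner_add_right)
  with convex_on_grad_le[OF cvx z(1) \<open>w \<in> S\<close> z(2)]
  have inner_le: "g \<bullet> (m - z) \<le> 2 * M - r * norm g"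
    using hw bound(2) unfolding g_def by linarith
  with large have "c * (g \<bullet> (m - z)) \<le> 1 * (g \<bullet> (m - z))"
    using y(2) unfolding g_def by (intro mult_right_mono_neg) auto
  moreover have "bregman h y z = h y - h z - c * (g \<bullet> (m - z))"
    by (simp add: bregman_def y(1) g_def)
  ultimately show ?thesis
    using inner_le bound(2,3) unfolding g_def by linarith
qed

lemma filterlim_linepath_at_right_0:
  fixes x y :: "'a::real_normed_vector"
  assumes "x \<noteq> y" and "\<forall>\<^sub>F t in at_right 0. linepath x y t \<in> U"
  shows "filterlim (linepath x y) (at x within U) (at_right 0)"
  unfolding filterlim_at
proof
  have "\<forall>\<^sub>F t in at_right (0::real). t \<noteq> 0"
    by (simp add: eventually_at_filter)
  moreover have "linepath x y t \<noteq> x" if "t \<noteq> 0" for t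
    using that assms(1) by (simp add: linepath_def algebra_simps)
  ultimately show "\<forall>\<^sub>F t in at_right 0. linepath x y t \<in> U \<and> linepath x y t \<noteq> x"
    using assms(2) by (auto elim: eventually_elim2)
  have "((\<lambda>t. (1 - t) *\<^sub>R x + t *\<^sub>R y) \<longlongrightarrow> (1 - 0) *\<^sub>R x + 0 *\<^sub>R y) (at_right 0)"
    by (intro tendsto_intros)
  then show "(linepath x y \<longlongrightarrow> x) (at_right 0)"
    by (simp add: linepath_def)
qed

lemma linepath_in_interior_convex:
  fixes S :: "'a::euclidean_space set"
  assumes "convex S" "x \<in> closure S" "midpoint x y \<in> interior S" "0 < t" "t \<le> 1/2"
  shows "linepath x y t \<in> interior S"
proof -
  have "x - (2 * t) *\<^sub>R (x - midpoint x y) \<in> interior S"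
    using mem_interior_closure_convex_shrink[OF assms(1,3,2)] assms(4,5) by simp
  also have "x - (2 * t) *\<^sub>R (x - midpoint x y) = linepath x y t"
    by (simp add: midpoint_def linepath_def algebra_simps) (simp only: mult_2_right scaleR_add_left)
  finally show ?thesis .
qed

lemma bregman_linepath_ge_norm_grad:
  fixes h :: "'a::euclidean_space \<Rightarrow> real" and x y :: 'a and t :: real
  defines "z \<equiv> linepath x y t"
  assumes cvx: "convex_on S h" and z: "z \<in> S" "h differentiable (at z)" and t: "0 < t" "t < 1/2"
    and ball: "0 \<le> r" "cball (midpoint x y) r \<subseteq> S"
    and bound: "\<forall>w\<in>cball (midpoint x y) r \<union> closed_segment x y. \<bar>h w\<bar> \<le> M"
    and large: "2 * M \<le> r * norm (grad h z)"
  shows "r * norm (grad h z) - 4 * M \<le> bregman h y z"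
proof (rule bregman_ge_norm_grad[OF cvx z ball _ _ _ _ _ large])
  have "midpoint x y - z = (1/2 - t) *\<^sub>R (y - x)" "y - z = (1 - t) *\<^sub>R (y - x)"
    by (simp_all add: z_def midpoint_def linepath_def algebra_simps flip: scaleR_add_left)
  then show "y - z = ((1 - t) / (1/2 - t)) *\<^sub>R (midpoint x y - z)"
    using t by simp
  show "1 \<le> (1 - t) / (1/2 - t)"
    using t by (simp add: divide_simps)
  show "\<bar>h z\<bar> \<le> M" "\<bar>h y\<bar> \<le> M"
    using bound linepath_in_path[of t x y] t unfolding z_def by auto
qed (use bound in auto)

theorem lemma1:
  fixes C :: "'a::euclidean_space set" and h :: "'a \<Rightarrow> real" and x y :: 'a
  assumes "convex C" and "closed C" and "interior C \<noteq> {}"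
    and "legendre C h"
    and "continuous_on C h"
    and condB: "\<And>X z. (\<forall>k. X k \<in> interior C) \<Longrightarrow> z \<in> C \<Longrightarrow> X \<longlonglongrightarrow> z \<Longrightarrow>
                  (\<lambda>k. bregman h z (X k)) \<longlonglongrightarrow> 0"
    and "x \<in> frontier C" and "y \<in> C"
    and "(1/2) *\<^sub>R (x + y) \<in> interior C"
  shows "filterlim (\<lambda>t. bregman h y ((1 - t) *\<^sub>R x + t *\<^sub>R y)) at_top (at_right 0)"
proof -
  have cvx: "convex_on (interior C) h"
    using assms(1,4) convex_on_subset[OF _ interior_subset convex_interior]
    by (auto simp: legendre_def)
  have diff: "\<And>z. z \<in> interior C \<Longrightarrow> h differentiable (at z)"
    and blowup: "filterlim (\<lambda>z. norm (grad h z)) at_top (at x within interior C)"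
    using assms(4,7) by (auto simp: legendre_def)
  have m: "midpoint x y \<in> interior C"
    using assms(9) by (simp add: midpoint_def)
  then obtain r where r: "0 < r" "cball (midpoint x y) r \<subseteq> interior C"
    using open_contains_cball open_interior by blast
  have xC: "x \<in> C" and "x \<noteq> y"
    using assms(2,7) m frontier_subset_closed by (auto simp: frontier_def)
  have small: "\<forall>\<^sub>F t in at_right 0. 0 < t \<and> t < 1/2 \<and> linepath x y t \<in> interior C"
    using linepath_in_interior_convex[OF assms(1) closure_subset[THEN subsetD, OF xC] m]
    by (auto simp: eventually_at_right_field intro!: exI[of _ "1/2"])
  then have "filterlim (linepath x y) (at x within interior C) (at_right 0)"
    by (intro filterlim_linepath_at_right_0[OF \<open>x \<noteq> y\<close>]) (auto elim: eventually_mono)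
  from filterlim_compose[OF blowup this]
  have grad_lim: "filterlim (\<lambda>t. r * norm (grad h (linepath x y t))) at_top (at_right 0)"
    by (rule filterlim_tendsto_pos_mult_at_top[OF tendsto_const r(1)])
  have "cball (midpoint x y) r \<union> closed_segment x y \<subseteq> C"
    using r(2) interior_subset closed_segment_subset[OF xC assms(8,1)] by blast
  then obtain M where M: "\<forall>w\<in>cball (midpoint x y) r \<union> closed_segment x y. \<bar>h w\<bar> \<le> M"
    using continuous_on_compact_bound[of _ h] continuous_on_subset[OF assms(5)]
    by (metis compact_Un compact_cball compact_segment real_norm_def)
  have "\<forall>\<^sub>F t in at_right 0. r * norm (grad h (linepath x y t)) - 4 * M \<le> bregman h y (linepath x y t)"
    using small grad_lim[unfolded filterlim_at_top, rule_format, of "2 * M"]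
    by eventually_elim (use bregman_linepath_ge_norm_grad[OF cvx _ diff _ _ _ r(2) M] r(1) in auto)
  moreover have "filterlim (\<lambda>t. r * norm (grad h (linepath x y t)) - 4 * M) at_top (at_right 0)"
    using filterlim_tendsto_add_at_top[OF tendsto_const grad_lim, of "- 4 * M"] by simp
  ultimately show ?thesis
    unfolding linepath_def by (rule filterlim_at_top_mono[rotated])
qed

end
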